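(* Let $G$ be a structured quadratic-bilinear system given by $(\mathcal C,\mathcal K,\mathcal B,\mathcal N,\mathcal H)$ with structured generalized transfer functions, and $\widehat G$ the reduced-order system obtained by projection with $V,W\in\mathbb C^{n\times r}$, with reduced generalized transfer functions denoted by hats. Let $\sigma_1,\sigma_2,\sigma_3\in\mathbb C$ be such that $\mathcal C,\mathcal K,\mathcal B,\mathcal N$ can be evaluated at them, $\mathcal H$ at $(\sigma_2,\sigma_1)$, and $\mathcal K(\sigma_1),\mathcal K(\sigma_2),\mathcal K(\sigma_3)$ are invertible. Define $$V_{1,1}=\mathcal K(\sigma_1)^{-1}\mathcal B(\sigma_1),\quad V_{1,2}=\mathcal K(\sigma_2)^{-1}\mathcal B(\sigma_2),\quad V_2=\mathcal K(\sigma_2)^{-1}\mathcal N(\sigma_1)(I_m\otimes V_{1,1}),$$ $$V_{3,1}=\mathcal K(\sigma_3)^{-1}\mathcal N(\sigma_2)(I_m\otimes V_2),\quad V_{3,2}=\mathcal K(\sigma_3)^{-1}\mathcal H(\sigma_2,\sigma_1)(V_{1,2}\otimes V_{1,1}).$$ Suppose $V$ has full column rank with $\operatorname{span}(V)\supseteq\operatorname{span}([V_{1,1}\ V_{1,2}\ V_2\ V_{3,1}\ V_{3,2}])$, and $W$ is an arbitrary full-rank matrix of the same size with $W^{\mathsf H}\mathcal K(\sigma_i)V$ invertible for $i=1,2,3$. Then $$G_1^{(B)}(\sigma_1)=\widehat G_1^{(B)}(\sigma_1),\quad G_1^{(B)}(\sigma_2)=\widehat G_1^{(B)}(\sigma_2),\quad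 G_2^{(N,(B))}(\sigma_1,\sigma_2)=\widehat G_2^{(N,(B))}(\sigma_1,\sigma_2),$$ $$G_3^{(N,(N,(B)))}(\sigma_1,\sigma_2,\sigma_3)=\widehat G_3^{(N,(N,(B)))}(\sigma_1,\sigma_2,\sigma_3),\quad G_3^{(H,(B),(B))}(\sigma_1,\sigma_2,\sigma_3)=\widehat G_3^{(H,(B),(B))}(\sigma_1,\sigma_2,\sigma_3).$$
   Context: A structured quadratic-bilinear system (in frequency domain) with $n$ states, $m$ inputs and $p$ outputs is given by matrix-valued functions $\mathcal C:\mathbb C\to\mathbb C^{p\times n}$, $\mathcal K:\mathbb C\to\mathbb C^{n\times n}$, $\mathcal B:\mathbb C\to\mathbb C^{n\times m}$, $\mathcal N:\mathbb C\to\mathbb C^{n\times nm}$ with $\mathcal N(s)=[\mathcal N_1(s)\ \cdots\ \mathcal N_m(s)]$, $\mathcal N_j(s)\in\mathbb C^{n\times n}$, and $\mathcal H:\mathbb C\times\mathbb C\to\mathbb C^{n\times n^2}$. Its structured generalized transfer functions are $G_1^{(B)}(s_1)=\mathcal C(s_1)\mathcal K(s_1)^{-1}\mathcal B(s_1)$, $G_2^{(N,(B))}(s_1,s_2)=\mathcal C(s_2)\mathcal K(s_2)^{-1}\mathcal N(s_1)\big(I_m\otimes\mathcal K(s_1)^{-1}\mathcal B(s_1)\big)$, $G_3^{(N,(N,(B)))}(s_1,s_2,s_3)=\mathcal C(s_3)\mathcal K(s_3)^{-1}\mathcal N(s_2)\Big(I_m\otimes\mathcal K(s_2)^{-1}\mathcal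 N(s_1)\big(I_m\otimes\mathcal K(s_1)^{-1}\mathcal B(s_1)\big)\Big)$, $G_3^{(H,(B),(B))}(s_1,s_2,s_3)=\mathcal C(s_3)\mathcal K(s_3)^{-1}\mathcal H(s_2,s_1)\big(\mathcal K(s_2)^{-1}\mathcal B(s_2)\otimes\mathcal K(s_1)^{-1}\mathcal B(s_1)\big)$, wherever the inverses exist; $\otimes$ is the Kronecker product. The reduced-order system obtained by projection with $V,W\in\mathbb C^{n\times r}$ is given by $\widehat{\mathcal C}(s)=\mathcal C(s)V$, $\widehat{\mathcal K}(s)=W^{\mathsf H}\mathcal K(s)V$, $\widehat{\mathcal B}(s)=W^{\mathsf H}\mathcal B(s)$, $\widehat{\mathcal N}(s)=W^{\mathsf H}\mathcal N(s)(I_m\otimes V)$, $\widehat{\mathcal H}(s_1,s_2)=W^{\mathsf H}\mathcal H(s_1,s_2)(V\otimes V)$, where $W^{\mathsf H}$ is the conjugate transpose; its generalized transfer functions $\widehat G$ are defined by the same formulas with hatted functions. *)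

theory Defs
  imports "Jordan_Normal_Form.Schur_Decomposition" "Jordan_Normal_Form.DL_Rank"
begin

definition kron :: "'a :: times mat \<Rightarrow> 'a mat \<Rightarrow> 'a mat" where
  "kron A B = mat (dim_row A * dim_row B) (dim_col A * dim_col B)
     (\<lambda>(i,j). A $$ (i div dim_row B, j div dim_col B) * B $$ (i mod dim_row B, j mod dim_col B))"

text \<open>Matrix inverse (meaningful for invertible matrices).\<close>
definition minv :: "'a :: semiring_1 mat \<Rightarrow> 'a mat" where
  "minv A = (SOME B. inverts_mat A B \<and> inverts_mat B A)"

definition hcat :: "'a :: zero mat \<Rightarrow> 'a mat \<Rightarrow> 'a mat" where
  "hcat A B = mat (dim_row A) (dim_col A + dim_col B)
     (\<lambda>(i,j). if j < dim_col A then A $$ (i,j) else B $$ (i, j - dim_col A))"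

definition colspan :: "'a :: semiring_0 mat \<Rightarrow> 'a vec set" where
  "colspan A = {A *\<^sub>v x | x. x \<in> carrier_vec (dim_col A)}"

type_synonym cfun = "complex \<Rightarrow> complex mat"

definition G1 :: "cfun \<Rightarrow> cfun \<Rightarrow> cfun \<Rightarrow> complex \<Rightarrow> complex mat" where
  "G1 C K B s1 = C s1 * minv (K s1) * B s1"

definition G2 :: "nat \<Rightarrow> cfun \<Rightarrow> cfun \<Rightarrow> cfun \<Rightarrow> cfun \<Rightarrow> complex \<Rightarrow> complex \<Rightarrow> complex mat" where
  "G2 m C K B N s1 s2 = C s2 * minv (K s2) * N s1 * kron (1\<^sub>m m) (minv (K s1) * B s1)"

definition G3N :: "nat \<Rightarrow> cfun \<Rightarrow> cfun \<Rightarrow> cfun \<Rightarrow> cfun \<Rightarrow> complex \<Rightarrow> complex \<Rightarrow> complex \<Rightarrow> complex mat" where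
  "G3N m C K B N s1 s2 s3 = C s3 * minv (K s3) * N s2 *
      kron (1\<^sub>m m) (minv (K s2) * N s1 * kron (1\<^sub>m m) (minv (K s1) * B s1))"

definition G3H :: "cfun \<Rightarrow> cfun \<Rightarrow> cfun \<Rightarrow> (complex \<Rightarrow> complex \<Rightarrow> complex mat) \<Rightarrow> complex \<Rightarrow> complex \<Rightarrow> complex \<Rightarrow> complex mat" where
  "G3H C K B H s1 s2 s3 = C s3 * minv (K s3) * H s2 s1 *
      kron (minv (K s2) * B s2) (minv (K s1) * B s1)"

definition redC :: "cfun \<Rightarrow> complex mat \<Rightarrow> cfun" where
  "redC C V = (\<lambda>s. C s * V)"
definition redK :: "cfun \<Rightarrow> complex mat \<Rightarrow> complex mat \<Rightarrow> cfun" where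
  "redK K V W = (\<lambda>s. mat_adjoint W * K s * V)"
definition redB :: "cfun \<Rightarrow> complex mat \<Rightarrow> cfun" where
  "redB B W = (\<lambda>s. mat_adjoint W * B s)"
definition redN :: "nat \<Rightarrow> cfun \<Rightarrow> complex mat \<Rightarrow> complex mat \<Rightarrow> cfun" where
  "redN m N V W = (\<lambda>s. mat_adjoint W * N s * kron (1\<^sub>m m) V)"
definition redH :: "(complex \<Rightarrow> complex \<Rightarrow> complex mat) \<Rightarrow> complex mat \<Rightarrow> complex mat
      \<Rightarrow> complex \<Rightarrow> complex \<Rightarrow> complex mat" where
  "redH H V W = (\<lambda>s1 s2. mat_adjoint W * H s1 s2 * kron V V)"

end

theory Submission
  imports Defs
begin

text \<open>
  If the full-order state \<open>K(s)\<^sup>-\<^sup>1 R\<close> lies in the range of \<open>V\<close>, say equals \<open>V Y\<close>, then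
  \<open>W\<^sup>H R = (W\<^sup>H K(s) V) Y\<close>, so the Petrov-Galerkin reduced state \<open>(W\<^sup>H K(s) V)\<^sup>-\<^sup>1 W\<^sup>H R\<close>
  is exactly \<open>Y\<close> and the reduced output \<open>C(s) V Y\<close> equals the full one. The subspace
  condition puts each of \<open>V\<^sub>1\<^sub>,\<^sub>1, V\<^sub>1\<^sub>,\<^sub>2, V\<^sub>2, V\<^sub>3\<^sub>,\<^sub>1, V\<^sub>3\<^sub>,\<^sub>2\<close> into this form, and by the
  mixed-product rule for Kronecker products the reduced bilinear and quadratic terms applied
  to reduced states are the projections by \<open>W\<^sup>H\<close> of the full terms applied to the
  corresponding full states.
\<close>

lemma minv_inverts_mat:
  assumes "invertible_mat A"
  shows "inverts_mat A (minv A) \<and> inverts_mat (minv A) A"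
proof -
  have "\<exists>B. inverts_mat A B \<and> inverts_mat B A"
    using assms unfolding invertible_mat_def by blast
  then show ?thesis
    unfolding minv_def by (rule someI_ex)
qed

lemma minv_carrier_mat:
  assumes "invertible_mat A" "A \<in> carrier_mat n n"
  shows "minv A \<in> carrier_mat n n"
proof -
  have AB: "A * minv A = 1\<^sub>m n" and BA: "minv A * A = 1\<^sub>m (dim_row (minv A))"
    using minv_inverts_mat[OF assms(1)] assms(2) unfolding inverts_mat_def by auto
  have "dim_col (minv A) = n"
    using arg_cong[OF AB, of dim_col] by simp
  moreover have "dim_row (minv A) = n"
    using arg_cong[OF BA, of dim_col] assms(2) by simp
  ultimately show ?thesis by auto
qed

lemma mult_minv_mat:
  assumes "invertible_mat A" "A \<in> carrier_mat n n"
  shows "A * minv A = 1\<^sub>m n"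
  using minv_inverts_mat[OF assms(1)] assms(2) unfolding inverts_mat_def by simp

lemma minv_mult_mat:
  assumes "invertible_mat A" "A \<in> carrier_mat n n"
  shows "minv A * A = 1\<^sub>m n"
  using minv_inverts_mat[OF assms(1)] minv_carrier_mat[OF assms] unfolding inverts_mat_def by simp

text \<open>Unlike \<open>assoc_mult_mat\<close>, the side conditions only mention dimensions of the factors,
  so the simplifier can discharge them when the factors are themselves products.\<close>

lemma assoc_mult_mat_dims:
  fixes A B C :: "'a :: semiring_0 mat"
  assumes "dim_col A = dim_row B" "dim_col B = dim_row C"
  shows "A * B * C = A * (B * C)"
proof (rule assoc_mult_mat)
  show "A \<in> carrier_mat (dim_row A) (dim_row B)" using assms by auto
  show "B \<in> carrier_mat (dim_row B) (dim_row C)" using assms by auto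
qed auto

lemma mat_adjoint_carrier_mat [simp]: "W \<in> carrier_mat n r \<Longrightarrow> mat_adjoint W \<in> carrier_mat r n"
  unfolding mat_adjoint_def by auto

lemma kron_carrier_mat [simp]:
  "kron A B \<in> carrier_mat (dim_row A * dim_row B) (dim_col A * dim_col B)"
  "dim_row (kron A B) = dim_row A * dim_row B"
  "dim_col (kron A B) = dim_col A * dim_col B"
  unfolding kron_def by auto

lemma sum_lessThan_mult_div_mod:
  fixes b :: nat
  shows "(\<Sum>k<a * b. f (k div b) (k mod b)) = (\<Sum>i<a. \<Sum>j<b. f i j)"
proof -
  have mult_add_less: "i * b + j < a * b" if "i < a" "j < b" for i j
  proof -
    have "i * b + j < (i + 1) * b" using that(2) by simp
    also have "\<dots> \<le> a * b" using that(1) by (intro mult_right_mono) auto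
    finally show ?thesis .
  qed
  have "bij_betw (\<lambda>k. (k div b, k mod b)) {..<a * b} ({..<a} \<times> {..<b})"
    by (rule bij_betw_byWitness[where f' = "\<lambda>(i, j). i * b + j"])
       (auto simp: less_mult_imp_div_less mult_add_less
             intro: mod_less_divisor dest: gr_implies_not0 less_mult_imp_div_less)
  then show ?thesis
    by (simp add: sum.reindex_bij_betw[symmetric, where h = "\<lambda>k. (k div b, k mod b)"]
        sum.cartesian_product)
qed

lemma kron_mult:
  fixes A B C D :: "'a :: comm_semiring_1 mat"
  assumes "A \<in> carrier_mat ra ca" "B \<in> carrier_mat rb cb"
    and "C \<in> carrier_mat ca cc" "D \<in> carrier_mat cb cd"
  shows "kron A B * kron C D = kron (A * C) (B * D)"
proof (rule eq_matI)
  fix i j assume "i < dim_row (kron (A * C) (B * D))" "j < dim_col (kron (A * C) (B * D))"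
  then have i: "i < ra * rb" and j: "j < cc * cd"
    using assms by auto
  then have "i div rb < ra" "j div cd < cc" "i mod rb < rb" "j mod cd < cd"
    by (auto simp: less_mult_imp_div_less intro: mod_less_divisor dest: gr_implies_not0)
  then have "(kron A B * kron C D) $$ (i, j) = (\<Sum>k<ca * cb.
        (A $$ (i div rb, k div cb) * B $$ (i mod rb, k mod cb)) *
      (C $$ (k div cb, j div cd) * D $$ (k mod cb, j mod cd)))"
    using assms i j unfolding kron_def times_mat_def scalar_prod_def
    by (auto intro!: sum.cong simp: lessThan_atLeast0 less_mult_imp_div_less)
  also have "\<dots> = (\<Sum>a<ca. \<Sum>b<cb.
      (A $$ (i div rb, a) * B $$ (i mod rb, b)) * (C $$ (a, j div cd) * D $$ (b, j mod cd)))"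
    by (rule sum_lessThan_mult_div_mod)
  also have "\<dots> = (\<Sum>a<ca. A $$ (i div rb, a) * C $$ (a, j div cd)) *
                   (\<Sum>b<cb. B $$ (i mod rb, b) * D $$ (b, j mod cd))"
    by (simp add: sum_product mult_ac)
  also have "\<dots> = kron (A * C) (B * D) $$ (i, j)"
    using assms i j \<open>i div rb < ra\<close> \<open>j div cd < cc\<close> \<open>i mod rb < rb\<close> \<open>j mod cd < cd\<close>
    unfolding kron_def by (simp add: scalar_prod_def lessThan_atLeast0)
  finally show "(kron A B * kron C D) $$ (i, j) = kron (A * C) (B * D) $$ (i, j)" .
qed (use assms in auto)

lemma dim_hcat [simp]:
  "dim_row (hcat X Z) = dim_row X" "dim_col (hcat X Z) = dim_col X + dim_col Z"
  unfolding hcat_def by simp_all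

lemma hcat_mult_append_vec:
  fixes X Z :: "'a :: comm_semiring_0 mat"
  assumes "x \<in> carrier_vec (dim_col X)" "z \<in> carrier_vec (dim_col Z)" "dim_row Z = dim_row X"
  shows "hcat X Z *\<^sub>v (x @\<^sub>v z) = X *\<^sub>v x + Z *\<^sub>v z"
proof (rule eq_vecI)
  fix i assume "i < dim_vec (X *\<^sub>v x + Z *\<^sub>v z)"
  then have i: "i < dim_row X" using assms(3) by simp
  then have "row (hcat X Z) i = row X i @\<^sub>v row Z i"
    using assms(3) by (intro eq_vecI) (auto simp: hcat_def)
  then show "(hcat X Z *\<^sub>v (x @\<^sub>v z)) $ i = (X *\<^sub>v x + Z *\<^sub>v z) $ i"
    using i assms by (simp add: hcat_def scalar_prod_append[of _ "dim_col X" _ "dim_col Z"])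
qed (use assms in \<open>simp add: hcat_def\<close>)

lemma colspan_hcat_subsetD:
  fixes X Z :: "'a :: comm_semiring_0 mat"
  assumes "colspan (hcat X Z) \<subseteq> U" "dim_row Z = dim_row X"
  shows "colspan X \<subseteq> U \<and> colspan Z \<subseteq> U"
proof (intro conjI)
  have mult_zero: "A *\<^sub>v 0\<^sub>v (dim_col A) = 0\<^sub>v (dim_row A)" for A :: "'a mat"
    by (intro eq_vecI) auto
  have in_U: "hcat X Z *\<^sub>v (x @\<^sub>v z) \<in> U"
    if "x \<in> carrier_vec (dim_col X)" "z \<in> carrier_vec (dim_col Z)" for x z
    using assms(1) that unfolding colspan_def by auto
  show "colspan X \<subseteq> U"
  proof
    fix v assume "v \<in> colspan X"
    then obtain x where x: "x \<in> carrier_vec (dim_col X)" and v: "v = X *\<^sub>v x"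
      unfolding colspan_def by auto
    have "hcat X Z *\<^sub>v (x @\<^sub>v 0\<^sub>v (dim_col Z)) = X *\<^sub>v x + Z *\<^sub>v 0\<^sub>v (dim_col Z)"
      using x assms(2) by (intro hcat_mult_append_vec) auto
    also have "\<dots> = X *\<^sub>v x + 0\<^sub>v (dim_row X)"
      using assms(2) mult_zero[of Z] by simp
    also have "\<dots> = v"
      unfolding v by (intro right_zero_vec carrier_vecI) simp
    finally show "v \<in> U"
      using in_U[OF x zero_carrier_vec] by simp
  qed
  show "colspan Z \<subseteq> U"
  proof
    fix v assume "v \<in> colspan Z"
    then obtain z where z: "z \<in> carrier_vec (dim_col Z)" and v: "v = Z *\<^sub>v z"
      unfolding colspan_def by auto
    have "hcat X Z *\<^sub>v (0\<^sub>v (dim_col X) @\<^sub>v z) = X *\<^sub>v 0\<^sub>v (dim_col X) + Z *\<^sub>v z"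
      using z assms(2) by (intro hcat_mult_append_vec) auto
    also have "\<dots> = 0\<^sub>v (dim_row Z) + Z *\<^sub>v z"
      using assms(2) mult_zero[of X] by simp
    also have "\<dots> = v"
      unfolding v by (intro left_zero_vec carrier_vecI) simp
    finally show "v \<in> U"
      using in_U[OF zero_carrier_vec z] by simp
  qed
qed

lemma colspan_subset_imp_mult:
  fixes X V :: "'a :: semiring_1 mat"
  assumes "colspan X \<subseteq> colspan V"
  obtains Y where "Y \<in> carrier_mat (dim_col V) (dim_col X)" "X = V * Y"
proof -
  have "col X j \<in> colspan V" if "j < dim_col X" for j
  proof -
    have "col X j = X *\<^sub>v unit_vec (dim_col X) j"
      using that by (intro eq_vecI) simp_all
    then have "col X j \<in> colspan X"
      unfolding colspan_def using unit_vec_carrier by blast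
    then show ?thesis
      using assms by blast
  qed
  then have "\<forall>j. \<exists>y. j < dim_col X \<longrightarrow> y \<in> carrier_vec (dim_col V) \<and> col X j = V *\<^sub>v y"
    unfolding colspan_def by blast
  then obtain y where y: "\<And>j. j < dim_col X \<Longrightarrow> y j \<in> carrier_vec (dim_col V) \<and> col X j = V *\<^sub>v y j"
    using choice[of "\<lambda>j y. j < dim_col X \<longrightarrow> y \<in> carrier_vec (dim_col V) \<and> col X j = V *\<^sub>v y"] by blast
  have "X *\<^sub>v 0\<^sub>v (dim_col X) \<in> colspan X"
    unfolding colspan_def using zero_carrier_vec by blast
  then obtain z where "X *\<^sub>v 0\<^sub>v (dim_col X) = V *\<^sub>v z"
    using assms unfolding colspan_def by blast
  from arg_cong[OF this, of dim_vec] have rows: "dim_row X = dim_row V"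
    by simp
  define Y where "Y = mat (dim_col V) (dim_col X) (\<lambda>(i, j). y j $ i)"
  have "col (V * Y) j = col X j" if "j < dim_col X" for j
  proof -
    have "dim_vec (y j) = dim_col V"
      using y[OF that] by (blast dest: carrier_vecD)
    then have "col Y j = y j"
      using that unfolding Y_def by (intro eq_vecI) simp_all
    moreover have "col (V * Y) j = V *\<^sub>v col Y j"
      using that unfolding Y_def by (rule col_mult2[OF carrier_mat_triv mat_carrier])
    ultimately show ?thesis
      using y[OF that] by simp
  qed
  then have "X = V * Y"
    using rows unfolding Y_def by (intro mat_col_eqI[symmetric]) simp_all
  moreover have "Y \<in> carrier_mat (dim_col V) (dim_col X)"
    unfolding Y_def by simp
  ultimately show ?thesis
    using that by blast
qed

lemma petrov_galerkin_exact:
  fixes K V L R Y :: "'a :: comm_ring_1 mat"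
  assumes K: "K \<in> carrier_mat n n" "invertible_mat K"
    and V: "V \<in> carrier_mat n r" and L: "L \<in> carrier_mat r n" and KL: "invertible_mat (L * K * V)"
    and R: "R \<in> carrier_mat n c" and Y: "Y \<in> carrier_mat r c"
    and state: "minv K * R = V * Y"
  shows "minv (L * K * V) * (L * R) = Y"
proof -
  have Kr: "L * K * V \<in> carrier_mat r r" using K L V by auto
  have Ki: "minv K \<in> carrier_mat n n" using K by (simp add: minv_carrier_mat)
  have "R = K * minv K * R"
    using K R by (simp add: mult_minv_mat)
  also have "\<dots> = K * (V * Y)"
    using K Ki R by (simp add: assoc_mult_mat_dims state)
  finally have "minv (L * K * V) * (L * R) = minv (L * K * V) * (L * K * V) * Y"
    using K L V Y minv_carrier_mat[OF KL Kr] by (simp add: assoc_mult_mat_dims)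
  then show ?thesis
    using Kr KL Y by (simp add: minv_mult_mat)
qed

locale projected_system =
  fixes n m p r :: nat
    and C K B N :: "complex \<Rightarrow> complex mat"
    and V W :: "complex mat"
    and S :: "complex set"
  assumes C_carrier: "s \<in> S \<Longrightarrow> C s \<in> carrier_mat p n"
    and K_carrier: "s \<in> S \<Longrightarrow> K s \<in> carrier_mat n n"
    and B_carrier: "s \<in> S \<Longrightarrow> B s \<in> carrier_mat n m"
    and N_carrier: "s \<in> S \<Longrightarrow> N s \<in> carrier_mat n (n * m)"
    and K_invertible: "s \<in> S \<Longrightarrow> invertible_mat (K s)"
    and V_carrier: "V \<in> carrier_mat n r"
    and W_carrier: "W \<in> carrier_mat n r"
    and redK_invertible: "s \<in> S \<Longrightarrow> invertible_mat (redK K V W s)"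
begin

lemma adjoint_W_carrier: "mat_adjoint W \<in> carrier_mat r n"
  using W_carrier by simp

lemma minv_K_carrier: "s \<in> S \<Longrightarrow> minv (K s) \<in> carrier_mat n n"
  by (simp add: minv_carrier_mat K_invertible K_carrier)

lemma redK_carrier: "s \<in> S \<Longrightarrow> redK K V W s \<in> carrier_mat r r"
  using K_carrier[of s] V_carrier adjoint_W_carrier unfolding redK_def by auto

lemma minv_redK_carrier: "s \<in> S \<Longrightarrow> minv (redK K V W s) \<in> carrier_mat r r"
  by (simp add: minv_carrier_mat redK_invertible redK_carrier)

lemma redN_carrier: "s \<in> S \<Longrightarrow> redN m N V W s \<in> carrier_mat r (m * r)"
  using N_carrier[of s] V_carrier adjoint_W_carrier unfolding redN_def by (auto simp: mult.commute)

lemma redH_carrier: "H s1 s2 \<in> carrier_mat n (n * n) \<Longrightarrow> redH H V W s1 s2 \<in> carrier_mat r (r * r)"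
  using V_carrier adjoint_W_carrier unfolding redH_def by auto

lemma V_coordinates:
  assumes "colspan X \<subseteq> colspan V" "X \<in> carrier_mat n c"
  obtains Y where "Y \<in> carrier_mat r c" "X = V * Y"
  using colspan_subset_imp_mult[OF assms(1)] V_carrier assms(2) by (metis carrier_matD(2))

lemma reduced_state:
  assumes "s \<in> S" "R \<in> carrier_mat n c" "Y \<in> carrier_mat r c" "minv (K s) * R = V * Y"
  shows "minv (redK K V W s) * (mat_adjoint W * R) = Y"
  using petrov_galerkin_exact[OF K_carrier K_invertible V_carrier _ _ assms(2-4)] assms(1)
    W_carrier redK_invertible unfolding redK_def by simp

lemma reduced_output:
  assumes "s \<in> S" "R \<in> carrier_mat n c" "Y \<in> carrier_mat r c" "minv (K s) * R = V * Y"
  shows "redC C V s * minv (redK K V W s) * (mat_adjoint W * R) = C s * minv (K s) * R"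
proof -
  have "redC C V s * minv (redK K V W s) * (mat_adjoint W * R)
      = C s * (V * (minv (redK K V W s) * (mat_adjoint W * R)))"
    using assms C_carrier[OF assms(1)] V_carrier minv_redK_carrier[OF assms(1)] adjoint_W_carrier
    unfolding redC_def by (simp add: assoc_mult_mat_dims)
  also have "\<dots> = C s * (minv (K s) * R)"
    using assms by (simp add: reduced_state)
  finally show ?thesis
    using assms C_carrier[OF assms(1)] minv_K_carrier[OF assms(1)] by (simp add: assoc_mult_mat_dims)
qed

lemma reduced_B_state:
  assumes "s \<in> S" "Y \<in> carrier_mat r m" "minv (K s) * B s = V * Y"
  shows "minv (redK K V W s) * redB B W s = Y"
  using reduced_state[OF assms(1) B_carrier assms(2,3)] assms(1) unfolding redB_def .

lemma G1_interpolation: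
  assumes "s \<in> S" "Y \<in> carrier_mat r m" "minv (K s) * B s = V * Y"
  shows "G1 C K B s = G1 (redC C V) (redK K V W) (redB B W) s"
  using reduced_output[OF assms(1) B_carrier assms(2,3)] assms(1) unfolding G1_def redB_def by simp

lemma redN_mult_kron:
  assumes "s \<in> S" "Z \<in> carrier_mat r c"
  shows "redN m N V W s * kron (1\<^sub>m m) Z = mat_adjoint W * (N s * kron (1\<^sub>m m) (V * Z))"
proof -
  have "kron (1\<^sub>m m) V * kron (1\<^sub>m m) Z = kron (1\<^sub>m m) (V * Z)"
    using kron_mult[OF one_carrier_mat V_carrier one_carrier_mat assms(2)] by simp
  then show ?thesis
    using assms N_carrier[OF assms(1)] V_carrier adjoint_W_carrier unfolding redN_def
    by (simp add: assoc_mult_mat_dims mult.commute)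
qed

lemma redH_mult_kron:
  assumes "H s1 s2 \<in> carrier_mat n (n * n)" "Z1 \<in> carrier_mat r c1" "Z2 \<in> carrier_mat r c2"
  shows "redH H V W s1 s2 * kron Z1 Z2 = mat_adjoint W * (H s1 s2 * kron (V * Z1) (V * Z2))"
proof -
  have "kron V V * kron Z1 Z2 = kron (V * Z1) (V * Z2)"
    using kron_mult[OF V_carrier V_carrier assms(2,3)] .
  then show ?thesis
    using assms V_carrier adjoint_W_carrier unfolding redH_def
    by (simp add: assoc_mult_mat_dims)
qed

lemma reduced_N_state:
  assumes "s \<in> S" "s' \<in> S" "Z \<in> carrier_mat r c" "Y \<in> carrier_mat r (m * c)"
    and "minv (K s) * N s' * kron (1\<^sub>m m) (V * Z) = V * Y"
  shows "minv (redK K V W s) * redN m N V W s' * kron (1\<^sub>m m) Z = Y"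
proof -
  have R: "N s' * kron (1\<^sub>m m) (V * Z) \<in> carrier_mat n (m * c)"
    using N_carrier[OF assms(2)] V_carrier assms(3) by (auto simp: mult.commute)
  have "minv (redK K V W s) * redN m N V W s' * kron (1\<^sub>m m) Z
      = minv (redK K V W s) * (redN m N V W s' * kron (1\<^sub>m m) Z)"
    using assms(3) minv_redK_carrier[OF assms(1)] redN_carrier[OF assms(2)]
    by (simp add: assoc_mult_mat_dims)
  also have "\<dots> = minv (redK K V W s) * (mat_adjoint W * (N s' * kron (1\<^sub>m m) (V * Z)))"
    by (simp add: redN_mult_kron[OF assms(2,3)])
  also have "\<dots> = Y"
    using assms minv_K_carrier[OF assms(1)] N_carrier[OF assms(2)] V_carrier
    by (intro reduced_state[OF assms(1) R assms(4)]) (simp add: assoc_mult_mat_dims mult.commute)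
  finally show ?thesis .
qed

lemma reduced_N_output:
  assumes "s \<in> S" "s' \<in> S" "Z \<in> carrier_mat r c" "Y \<in> carrier_mat r (m * c)"
    and "minv (K s) * N s' * kron (1\<^sub>m m) (V * Z) = V * Y"
  shows "redC C V s * minv (redK K V W s) * redN m N V W s' * kron (1\<^sub>m m) Z
       = C s * minv (K s) * N s' * kron (1\<^sub>m m) (V * Z)"
proof -
  have R: "N s' * kron (1\<^sub>m m) (V * Z) \<in> carrier_mat n (m * c)"
    using N_carrier[OF assms(2)] V_carrier assms(3) by (auto simp: mult.commute)
  have "redC C V s * minv (redK K V W s) * redN m N V W s' * kron (1\<^sub>m m) Z
      = redC C V s * minv (redK K V W s) * (redN m N V W s' * kron (1\<^sub>m m) Z)"
    using assms(3) C_carrier[OF assms(1)] V_carrier minv_redK_carrier[OF assms(1)]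
      redN_carrier[OF assms(2)]
    unfolding redC_def by (simp add: assoc_mult_mat_dims)
  also have "\<dots> = C s * minv (K s) * (N s' * kron (1\<^sub>m m) (V * Z))"
    using assms minv_K_carrier[OF assms(1)] N_carrier[OF assms(2)] V_carrier
    by (simp add: redN_mult_kron[OF assms(2,3)] reduced_output[OF assms(1) R assms(4)]
        assoc_mult_mat_dims mult.commute)
  finally show ?thesis
    using C_carrier[OF assms(1)] minv_K_carrier[OF assms(1)] N_carrier[OF assms(2)] V_carrier assms(3)
    by (simp add: assoc_mult_mat_dims mult.commute)
qed

lemma reduced_H_output:
  assumes "s \<in> S" "H s1 s2 \<in> carrier_mat n (n * n)"
    and "Z1 \<in> carrier_mat r c1" "Z2 \<in> carrier_mat r c2" "Y \<in> carrier_mat r (c1 * c2)"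
    and "minv (K s) * H s1 s2 * kron (V * Z1) (V * Z2) = V * Y"
  shows "redC C V s * minv (redK K V W s) * redH H V W s1 s2 * kron Z1 Z2
       = C s * minv (K s) * H s1 s2 * kron (V * Z1) (V * Z2)"
proof -
  have R: "H s1 s2 * kron (V * Z1) (V * Z2) \<in> carrier_mat n (c1 * c2)"
    using assms(2-4) V_carrier by auto
  have "redC C V s * minv (redK K V W s) * redH H V W s1 s2 * kron Z1 Z2
      = redC C V s * minv (redK K V W s) * (redH H V W s1 s2 * kron Z1 Z2)"
    using assms(3,4) C_carrier[OF assms(1)] V_carrier minv_redK_carrier[OF assms(1)]
      redH_carrier[of H s1 s2, OF assms(2)]
    unfolding redC_def by (simp add: assoc_mult_mat_dims)
  also have "\<dots> = C s * minv (K s) * (H s1 s2 * kron (V * Z1) (V * Z2))"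
    using assms minv_K_carrier[OF assms(1)] V_carrier
    by (simp add: redH_mult_kron[of H s1 s2, OF assms(2-4)] reduced_output[OF assms(1) R assms(5)]
        assoc_mult_mat_dims)
  finally show ?thesis
    using C_carrier[OF assms(1)] minv_K_carrier[OF assms(1)] V_carrier assms(2-4)
    by (simp add: assoc_mult_mat_dims)
qed

lemma G2_interpolation:
  assumes "s1 \<in> S" "s2 \<in> S"
    and "Y1 \<in> carrier_mat r m" "minv (K s1) * B s1 = V * Y1"
    and "Y2 \<in> carrier_mat r (m * m)" "minv (K s2) * N s1 * kron (1\<^sub>m m) (V * Y1) = V * Y2"
  shows "G2 m C K B N s1 s2 = G2 m (redC C V) (redK K V W) (redB B W) (redN m N V W) s1 s2"
  using reduced_N_output[OF assms(2,1,3,5,6)]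
  unfolding G2_def reduced_B_state[OF assms(1,3,4)] assms(4) by simp

lemma G3N_interpolation:
  assumes "s1 \<in> S" "s2 \<in> S" "s3 \<in> S"
    and "Y1 \<in> carrier_mat r m" "minv (K s1) * B s1 = V * Y1"
    and "Y2 \<in> carrier_mat r (m * m)" "minv (K s2) * N s1 * kron (1\<^sub>m m) (V * Y1) = V * Y2"
    and "Y3 \<in> carrier_mat r (m * (m * m))" "minv (K s3) * N s2 * kron (1\<^sub>m m) (V * Y2) = V * Y3"
  shows "G3N m C K B N s1 s2 s3
       = G3N m (redC C V) (redK K V W) (redB B W) (redN m N V W) s1 s2 s3"
  using reduced_N_output[OF assms(3,2,6,8,9)]
  unfolding G3N_def reduced_B_state[OF assms(1,4,5)] reduced_N_state[OF assms(2,1,4,6,7)]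
    assms(5,7) by simp

lemma G3H_interpolation:
  assumes "s1 \<in> S" "s2 \<in> S" "s3 \<in> S" "H s2 s1 \<in> carrier_mat n (n * n)"
    and "Y1 \<in> carrier_mat r m" "minv (K s1) * B s1 = V * Y1"
    and "Y2 \<in> carrier_mat r m" "minv (K s2) * B s2 = V * Y2"
    and "Y3 \<in> carrier_mat r (m * m)" "minv (K s3) * H s2 s1 * kron (V * Y2) (V * Y1) = V * Y3"
  shows "G3H C K B H s1 s2 s3 = G3H (redC C V) (redK K V W) (redB B W) (redH H V W) s1 s2 s3"
  using reduced_H_output[of s3 H s2 s1, OF assms(3,4,7,5,9,10)]
  unfolding G3H_def reduced_B_state[OF assms(1,5,6)] reduced_B_state[OF assms(2,7,8)]
    assms(6,8) by simp

end

theorem proposition4p4: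
  fixes n m p r :: nat
    and C K B N :: "complex \<Rightarrow> complex mat"
    and H :: "complex \<Rightarrow> complex \<Rightarrow> complex mat"
    and V W :: "complex mat"
    and \<sigma>1 \<sigma>2 \<sigma>3 :: complex
  assumes dimC: "\<And>s. s \<in> {\<sigma>1, \<sigma>2, \<sigma>3} \<Longrightarrow> C s \<in> carrier_mat p n"
    and dimK: "\<And>s. s \<in> {\<sigma>1, \<sigma>2, \<sigma>3} \<Longrightarrow> K s \<in> carrier_mat n n"
    and dimB: "\<And>s. s \<in> {\<sigma>1, \<sigma>2, \<sigma>3} \<Longrightarrow> B s \<in> carrier_mat n m"
    and dimN: "\<And>s. s \<in> {\<sigma>1, \<sigma>2, \<sigma>3} \<Longrightarrow> N s \<in> carrier_mat n (n * m)"
    and dimH: "H \<sigma>2 \<sigma>1 \<in> carrier_mat n (n * n)"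
    and invK: "\<And>s. s \<in> {\<sigma>1, \<sigma>2, \<sigma>3} \<Longrightarrow> invertible_mat (K s)"
    and dimV: "V \<in> carrier_mat n r"
    and dimW: "W \<in> carrier_mat n r"
    and rankV: "vec_space.rank n V = r"
    and rankW: "vec_space.rank n W = r"
    and invKr: "\<And>s. s \<in> {\<sigma>1, \<sigma>2, \<sigma>3} \<Longrightarrow> invertible_mat (mat_adjoint W * K s * V)"
    and span: "let V11 = minv (K \<sigma>1) * B \<sigma>1;
                   V12 = minv (K \<sigma>2) * B \<sigma>2;
                   V2 = minv (K \<sigma>2) * N \<sigma>1 * kron (1\<^sub>m m) V11;
                   V31 = minv (K \<sigma>3) * N \<sigma>2 * kron (1\<^sub>m m) V2;
                   V32 = minv (K \<sigma>3) * H \<sigma>2 \<sigma>1 * kron V12 V11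
               in colspan (hcat V11 (hcat V12 (hcat V2 (hcat V31 V32)))) \<subseteq> colspan V"
  shows "G1 C K B \<sigma>1 = G1 (redC C V) (redK K V W) (redB B W) \<sigma>1
       \<and> G1 C K B \<sigma>2 = G1 (redC C V) (redK K V W) (redB B W) \<sigma>2
       \<and> G2 m C K B N \<sigma>1 \<sigma>2 = G2 m (redC C V) (redK K V W) (redB B W) (redN m N V W) \<sigma>1 \<sigma>2
       \<and> G3N m C K B N \<sigma>1 \<sigma>2 \<sigma>3
           = G3N m (redC C V) (redK K V W) (redB B W) (redN m N V W) \<sigma>1 \<sigma>2 \<sigma>3
       \<and> G3H C K B H \<sigma>1 \<sigma>2 \<sigma>3
           = G3H (redC C V) (redK K V W) (redB B W) (redH H V W) \<sigma>1 \<sigma>2 \<sigma>3"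
proof -
  interpret projected_system n m p r C K B N V W "{\<sigma>1, \<sigma>2, \<sigma>3}"
    using dimC dimK dimB dimN invK dimV dimW invKr by unfold_locales (simp_all add: redK_def)
  have \<sigma>: "\<sigma>1 \<in> {\<sigma>1, \<sigma>2, \<sigma>3}" "\<sigma>2 \<in> {\<sigma>1, \<sigma>2, \<sigma>3}" "\<sigma>3 \<in> {\<sigma>1, \<sigma>2, \<sigma>3}"
    by simp_all
  define V11 where "V11 = minv (K \<sigma>1) * B \<sigma>1"
  define V12 where "V12 = minv (K \<sigma>2) * B \<sigma>2"
  define V2 where "V2 = minv (K \<sigma>2) * N \<sigma>1 * kron (1\<^sub>m m) V11"
  define V31 where "V31 = minv (K \<sigma>3) * N \<sigma>2 * kron (1\<^sub>m m) V2"
  define V32 where "V32 = minv (K \<sigma>3) * H \<sigma>2 \<sigma>1 * kron V12 V11"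
  have carriers: "V11 \<in> carrier_mat n m" "V12 \<in> carrier_mat n m" "V2 \<in> carrier_mat n (m * m)"
    "V31 \<in> carrier_mat n (m * (m * m))" "V32 \<in> carrier_mat n (m * m)"
    using minv_K_carrier[OF \<sigma>(1)] minv_K_carrier[OF \<sigma>(2)] minv_K_carrier[OF \<sigma>(3)]
      B_carrier[OF \<sigma>(1)] B_carrier[OF \<sigma>(2)]
    unfolding V11_def V12_def V2_def V31_def V32_def by auto
  have "colspan (hcat V11 (hcat V12 (hcat V2 (hcat V31 V32)))) \<subseteq> colspan V"
    using span unfolding V11_def V12_def V2_def V31_def V32_def Let_def .
  then have sub: "colspan V11 \<subseteq> colspan V" "colspan V12 \<subseteq> colspan V" "colspan V2 \<subseteq> colspan V"
    "colspan V31 \<subseteq> colspan V" "colspan V32 \<subseteq> colspan V"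
    using carriers by (auto dest!: colspan_hcat_subsetD)
  obtain Y11 where Y11: "Y11 \<in> carrier_mat r m" "V11 = V * Y11"
    by (rule V_coordinates[OF sub(1) carriers(1)])
  obtain Y12 where Y12: "Y12 \<in> carrier_mat r m" "V12 = V * Y12"
    by (rule V_coordinates[OF sub(2) carriers(2)])
  obtain Y2 where Y2: "Y2 \<in> carrier_mat r (m * m)" "V2 = V * Y2"
    by (rule V_coordinates[OF sub(3) carriers(3)])
  obtain Y31 where Y31: "Y31 \<in> carrier_mat r (m * (m * m))" "V31 = V * Y31"
    by (rule V_coordinates[OF sub(4) carriers(4)])
  obtain Y32 where Y32: "Y32 \<in> carrier_mat r (m * m)" "V32 = V * Y32"
    by (rule V_coordinates[OF sub(5) carriers(5)])
  show ?thesis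
    using G1_interpolation[OF \<sigma>(1) Y11(1)] G1_interpolation[OF \<sigma>(2) Y12(1)]
      G2_interpolation[OF \<sigma>(1,2) Y11(1) _ Y2(1)] G3N_interpolation[OF \<sigma> Y11(1) _ Y2(1) _ Y31(1)]
      G3H_interpolation[where H = H, OF \<sigma> dimH Y11(1) _ Y12(1) _ Y32(1)]
      Y11(2) Y12(2) Y2(2) Y31(2) Y32(2)
    unfolding V11_def V12_def V2_def V31_def V32_def by simp
qed

end
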